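(* Consider a round of the triadic majority rule process among participants $x,y,z$ (nodes of a median graph) in which the initial current winner is $x$, the initial proposer is $y$, and all three participants follow truthful bargaining. Then the round ends with winner $\hat w = m(x,y,z)$.
   Context: $G$ is a finite connected unweighted undirected median graph: with shortest-path distance $d$ and $I_{ab}=\{w:d(a,w)+d(w,b)=d(a,b)\}$, $\lvert I_{ab}\cap I_{ac}\cap I_{bc}\rvert=1$ for all $a,b,c$, and $m(a,b,c)$ is that node. Triadic majority rule round: there is a current winner and a proposer. In each step the proposer proposes a node $a$ or a motion to end; all three vote simultaneously to accept or reject. If an alternative is accepted by majority it becomes the current winner. If the vote is unanimous the proposer stays; otherwise the participant in the minority becomes proposer. If a motion to end is accepted by majority the round ends, its winner being the current winner. Truthful bargaining: with current winner $w$, the preferred points of $u$ are $P_u=I_{uw}\setminus\{w\}$, its bargaining points are $B_u=(P_u\cap P_{u'})\cup(P_u\cap P_{u''})$ ($u',u''$ the other two), a best bargaining point is a point of $B_u$ closest to $u$. The participant proposes a best bargaining point if $B_u\neq\emptyset$ and a motion to end otherwise; accepts an alternative $a$ iff $d(u,a)<d(u,w)$; accepts a motion to end iff $B_u=\emptyset$; ties broken arbitrarily. *)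

theory Defs
  imports Main
begin

fun walk :: "('a \<Rightarrow> 'a \<Rightarrow> bool) \<Rightarrow> 'a list \<Rightarrow> bool" where
  "walk E [] = False"
| "walk E [v] = True"
| "walk E (a # b # xs) = (E a b \<and> walk E (b # xs))"

definition gdist :: "('a \<Rightarrow> 'a \<Rightarrow> bool) \<Rightarrow> 'a \<Rightarrow> 'a \<Rightarrow> nat" where
  "gdist E a b = (LEAST n. \<exists>xs. walk E xs \<and> hd xs = a \<and> last xs = b \<and> length xs = Suc n)"

definition interval :: "'a set \<Rightarrow> ('a \<Rightarrow> 'a \<Rightarrow> bool) \<Rightarrow> 'a \<Rightarrow> 'a \<Rightarrow> 'a set" where
  "interval V E a b = {w \<in> V. gdist E a w + gdist E w b = gdist E a b}"

definition median_graph :: "'a set \<Rightarrow> ('a \<Rightarrow> 'a \<Rightarrow> bool) \<Rightarrow> bool" where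
  "median_graph V E \<longleftrightarrow>
     finite V \<and> V \<noteq> {} \<and>
     (\<forall>a b. E a b \<longrightarrow> a \<in> V \<and> b \<in> V) \<and>
     (\<forall>a b. E a b \<longrightarrow> E b a) \<and>
     (\<forall>a. \<not> E a a) \<and>
     (\<forall>a\<in>V. \<forall>b\<in>V. \<exists>xs. walk E xs \<and> hd xs = a \<and> last xs = b) \<and>
     (\<forall>a\<in>V. \<forall>b\<in>V. \<forall>c\<in>V.
        card (interval V E a b \<inter> interval V E a c \<inter> interval V E b c) = 1)"

definition median :: "'a set \<Rightarrow> ('a \<Rightarrow> 'a \<Rightarrow> bool) \<Rightarrow> 'a \<Rightarrow> 'a \<Rightarrow> 'a \<Rightarrow> 'a" where
  "median V E a b c = (THE w. w \<in> interval V E a b \<inter> interval V E a c \<inter> interval V E b c)"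

text \<open>The three participants (distinct agents; their nodes may coincide).\<close>
datatype agent = X | Y | Z

definition loc :: "'a \<Rightarrow> 'a \<Rightarrow> 'a \<Rightarrow> agent \<Rightarrow> 'a" where
  "loc x y z u = (case u of X \<Rightarrow> x | Y \<Rightarrow> y | Z \<Rightarrow> z)"

definition pref :: "'a set \<Rightarrow> ('a \<Rightarrow> 'a \<Rightarrow> bool) \<Rightarrow> (agent \<Rightarrow> 'a) \<Rightarrow> agent \<Rightarrow> 'a \<Rightarrow> 'a set" where
  "pref V E pos u w = interval V E (pos u) w - {w}"

definition barg :: "'a set \<Rightarrow> ('a \<Rightarrow> 'a \<Rightarrow> bool) \<Rightarrow> (agent \<Rightarrow> 'a) \<Rightarrow> agent \<Rightarrow> 'a \<Rightarrow> 'a set" where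
  "barg V E pos u w = (\<Union>v \<in> UNIV - {u}. pref V E pos u w \<inter> pref V E pos v w)"

definition best_barg :: "'a set \<Rightarrow> ('a \<Rightarrow> 'a \<Rightarrow> bool) \<Rightarrow> (agent \<Rightarrow> 'a) \<Rightarrow> agent \<Rightarrow> 'a \<Rightarrow> 'a \<Rightarrow> bool" where
  "best_barg V E pos u w a \<longleftrightarrow> a \<in> barg V E pos u w \<and>
     (\<forall>b \<in> barg V E pos u w. gdist E (pos u) a \<le> gdist E (pos u) b)"

text \<open>Outcome of a simultaneous vote: whether the majority accepted, and the next proposer
  (the proposer stays if unanimous, otherwise the unique participant in the minority).\<close>
definition majority :: "(agent \<Rightarrow> bool) \<Rightarrow> bool" where
  "majority acc \<longleftrightarrow> 2 \<le> card {u. acc u}"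

definition next_proposer :: "(agent \<Rightarrow> bool) \<Rightarrow> agent \<Rightarrow> agent" where
  "next_proposer acc p =
     (if (\<forall>u v. acc u = acc v) then p else (THE u. acc u \<noteq> majority acc))"

text \<open>State of a round: (current winner, proposer).  One step leads either to a new state
  (Inl) or ends the round with a winner (Inr).  Non-determinism models arbitrary tie-breaking
  among best bargaining points.\<close>
definition tmr_step :: "'a set \<Rightarrow> ('a \<Rightarrow> 'a \<Rightarrow> bool) \<Rightarrow> (agent \<Rightarrow> 'a) \<Rightarrow>
    'a \<times> agent \<Rightarrow> ('a \<times> agent + 'a) set" where
  "tmr_step V E pos s =
     (case s of (w, p) \<Rightarrow>
       if barg V E pos p w \<noteq> {} then
         {Inl (if majority acc then a else w, next_proposer acc p) | a acc.
            best_barg V E pos p w a \<and>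
            acc = (\<lambda>u. gdist E (pos u) a < gdist E (pos u) w)}
       else
         (let acc = (\<lambda>u. barg V E pos u w = {}) in
           if majority acc then {Inr w} else {Inl (w, next_proposer acc p)}))"

definition tmr_cont :: "'a set \<Rightarrow> ('a \<Rightarrow> 'a \<Rightarrow> bool) \<Rightarrow> (agent \<Rightarrow> 'a) \<Rightarrow>
    'a \<times> agent \<Rightarrow> 'a \<times> agent \<Rightarrow> bool" where
  "tmr_cont V E pos s s' \<longleftrightarrow> Inl s' \<in> tmr_step V E pos s"

end

theory Submission
  imports Defs
begin

text \<open>Starting from winner x, every bargaining point of the proposer y is a common
  preferred point of y and z, i.e. lies in I(x,y) \<inter> I(x,z) - {x}.  In a median graph this set
  is contained in the interval from x to the median m, so m is the unique bargaining point closest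
  to y; it is proposed and accepted by y and z, which are both strictly closer to it.  At the
  median the preferred points of any two participants meet only in m, so no one has a bargaining
  point, the motion to end passes unanimously and the winner is m.\<close>

lemma walk_not_Nil: "walk E xs \<Longrightarrow> xs \<noteq> []"
  by (cases xs) auto

lemma walk_append: "walk E xs \<Longrightarrow> walk E (last xs # ys) \<Longrightarrow> walk E (xs @ ys)"
  by (induction E xs rule: walk.induct) auto

lemma walk_rev: "(\<And>a b. E a b \<Longrightarrow> E b a) \<Longrightarrow> walk E xs \<Longrightarrow> walk E (rev xs)"
proof (induction E xs rule: walk.induct)
  case (3 E a b xs)
  then have "walk E (rev (b # xs) @ [a])"
    by (intro walk_append) simp_all
  then show ?case by simp
qed auto

lemma gdist_less_length:
  assumes "walk E xs" and "hd xs = a" and "last xs = b"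
  shows "gdist E a b < length xs"
proof -
  obtain n where n: "length xs = Suc n"
    using walk_not_Nil[OF assms(1)] by (cases xs) auto
  then have "gdist E a b \<le> n"
    unfolding gdist_def by (intro Least_le) (use assms in blast)
  then show ?thesis
    using n by simp
qed

lemma gdist_self [simp]: "gdist E a a = 0"
  using gdist_less_length[of E "[a]" a a] by simp

locale connected_graph =
  fixes V :: "'a set" and E :: "'a \<Rightarrow> 'a \<Rightarrow> bool"
  assumes edge_sym: "E a b \<Longrightarrow> E b a"
    and walk_exists: "a \<in> V \<Longrightarrow> b \<in> V \<Longrightarrow> \<exists>xs. walk E xs \<and> hd xs = a \<and> last xs = b"
begin

lemma shortest_walk_exists:
  assumes "a \<in> V" and "b \<in> V"
  shows "\<exists>xs. walk E xs \<and> hd xs = a \<and> last xs = b \<and> length xs = Suc (gdist E a b)"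
proof -
  obtain xs where xs: "walk E xs" "hd xs = a" "last xs = b"
    using walk_exists[OF assms] by blast
  then have "length xs = Suc (length xs - 1)"
    using walk_not_Nil by fastforce
  then have "\<exists>n xs. walk E xs \<and> hd xs = a \<and> last xs = b \<and> length xs = Suc n"
    using xs by blast
  then show ?thesis
    unfolding gdist_def by (rule LeastI_ex)
qed

lemma gdist_eq_0_iff:
  assumes "a \<in> V" and "b \<in> V"
  shows "gdist E a b = 0 \<longleftrightarrow> a = b"
proof
  assume "gdist E a b = 0"
  then obtain xs where "walk E xs" "hd xs = a" "last xs = b" "length xs = 1"
    using shortest_walk_exists[OF assms] by auto
  then show "a = b"
    by (cases xs) auto
qed simp

lemma gdist_commute:
  assumes "a \<in> V" and "b \<in> V"
  shows "gdist E a b = gdist E b a"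
proof -
  have le: "gdist E a b \<le> gdist E b a" if ab: "a \<in> V" "b \<in> V" for a b
  proof -
    obtain xs where xs: "walk E xs" "hd xs = b" "last xs = a" "length xs = Suc (gdist E b a)"
      using shortest_walk_exists[OF ab(2,1)] by blast
    have "walk E (rev xs)"
      using walk_rev[OF edge_sym xs(1)] .
    moreover have "hd (rev xs) = a" and "last (rev xs) = b"
      using xs walk_not_Nil by (auto simp: hd_rev last_rev)
    ultimately show ?thesis
      using gdist_less_length[of E "rev xs" a b] xs(4) by simp
  qed
  show ?thesis
    using le[OF assms] le[OF assms(2,1)] by simp
qed

lemma gdist_triangle:
  assumes "a \<in> V" and "b \<in> V" and "c \<in> V"
  shows "gdist E a c \<le> gdist E a b + gdist E b c"
proof -
  obtain xs where xs: "walk E xs" "hd xs = a" "last xs = b" "length xs = Suc (gdist E a b)"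
    using shortest_walk_exists[OF assms(1,2)] by blast
  obtain ys where ys: "walk E (b # ys)" "last (b # ys) = c" "length ys = gdist E b c"
    using shortest_walk_exists[OF assms(2,3)] by (metis length_Suc_conv list.sel(1))
  have "walk E (xs @ ys)"
    using walk_append[of E xs ys] xs ys by simp
  moreover have "hd (xs @ ys) = a" and "last (xs @ ys) = c"
    using xs ys walk_not_Nil[OF xs(1)] by auto
  ultimately show ?thesis
    using gdist_less_length[of E "xs @ ys" a c] xs(4) ys(3) by simp
qed

lemma interval_commute:
  assumes "a \<in> V" and "b \<in> V"
  shows "interval V E a b = interval V E b a"
  unfolding interval_def using assms by (auto simp: gdist_commute)

lemma interval_self: "a \<in> V \<Longrightarrow> interval V E a a = {a}"
  unfolding interval_def by (auto simp: gdist_eq_0_iff)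

lemma left_mem_interval: "a \<in> V \<Longrightarrow> a \<in> interval V E a b"
  unfolding interval_def by simp

lemma interval_trans:
  assumes "a \<in> V" and "b \<in> V" and "m \<in> interval V E a b" and "c \<in> interval V E m b"
  shows "c \<in> interval V E a b \<and> gdist E a c = gdist E a m + gdist E m c"
proof -
  have "m \<in> V" and "c \<in> V"
    using assms(3,4) unfolding interval_def by auto
  then have "gdist E a c \<le> gdist E a m + gdist E m c" and "gdist E a b \<le> gdist E a c + gdist E c b"
    using assms(1,2) by (auto intro: gdist_triangle)
  then show ?thesis
    using assms(3,4) \<open>c \<in> V\<close> unfolding interval_def by auto
qed

end

locale median_structure = connected_graph +
  assumes median_unique: "a \<in> V \<Longrightarrow> b \<in> V \<Longrightarrow> c \<in> V \<Longrightarrow>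
    card (interval V E a b \<inter> interval V E a c \<inter> interval V E b c) = 1"
begin

lemma intervals_inter_eq_median:
  assumes "a \<in> V" and "b \<in> V" and "c \<in> V"
  shows "interval V E a b \<inter> interval V E a c \<inter> interval V E b c = {median V E a b c}"
proof -
  obtain t where t: "interval V E a b \<inter> interval V E a c \<inter> interval V E b c = {t}"
    using median_unique[OF assms] by (rule card_1_singletonE)
  then have "median V E a b c = t"
    unfolding median_def by simp
  then show ?thesis
    using t by simp
qed

lemma interval_inter_subset_interval_median:
  assumes "x \<in> V" and "y \<in> V" and "z \<in> V"
  shows "interval V E x y \<inter> interval V E x z \<subseteq> interval V E x (median V E x y z)"
proof
  fix a assume a: "a \<in> interval V E x y \<inter> interval V E x z"
  then have "a \<in> V"
    unfolding interval_def by simp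
  txt \<open>The median of a, y, z is forced to be the median of x, y, z, and it lies beyond a
    as seen from x.\<close>
  define m' where "m' = median V E a y z"
  have m': "m' \<in> interval V E a y" "m' \<in> interval V E a z" "m' \<in> interval V E y z"
    using intervals_inter_eq_median[OF \<open>a \<in> V\<close> assms(2,3)] unfolding m'_def by auto
  have "m' \<in> interval V E x y \<and> gdist E x m' = gdist E x a + gdist E a m'"
    using interval_trans[OF assms(1,2) _ m'(1)] a by blast
  moreover have "m' \<in> interval V E x z"
    using interval_trans[OF assms(1,3) _ m'(2)] a by blast
  ultimately have "m' = median V E x y z" and "gdist E x m' = gdist E x a + gdist E a m'"
    using intervals_inter_eq_median[OF assms] m'(3) by auto
  with m'(1) \<open>a \<in> V\<close> show "a \<in> interval V E x (median V E x y z)"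
    unfolding interval_def by auto
qed

lemma interval_inter_at_between:
  assumes "p \<in> V" and "q \<in> V" and "m \<in> interval V E p q"
  shows "interval V E p m \<inter> interval V E q m = {m}"
proof -
  have "m \<in> V"
    using assms(3) unfolding interval_def by simp
  have "median V E m p q = m"
    using intervals_inter_eq_median[OF \<open>m \<in> V\<close> assms(1,2)] assms(3)
      left_mem_interval[OF \<open>m \<in> V\<close>, of p] left_mem_interval[OF \<open>m \<in> V\<close>, of q]
    by (metis IntI singletonD)
  then have "interval V E m p \<inter> interval V E m q \<subseteq> {m}"
    using interval_inter_subset_interval_median[OF \<open>m \<in> V\<close> assms(1,2)] interval_self[OF \<open>m \<in> V\<close>]
    by simp
  moreover have "m \<in> interval V E p m" "m \<in> interval V E q m"
    using interval_commute left_mem_interval \<open>m \<in> V\<close> assms(1,2) by auto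
  ultimately show ?thesis
    using interval_commute[OF assms(1) \<open>m \<in> V\<close>] interval_commute[OF assms(2) \<open>m \<in> V\<close>] by auto
qed

end

lemma median_graph_imp_median_structure: "median_graph V E \<Longrightarrow> median_structure V E"
  unfolding median_graph_def median_structure_def median_structure_axioms_def connected_graph_def
  by blast

lemma UNIV_agent: "(UNIV :: agent set) = {X, Y, Z}"
  using agent.exhaust by auto

lemma majority_if_two_accept:
  assumes "acc u" and "acc v" and "u \<noteq> v"
  shows "majority acc"
proof -
  have "finite {u. acc u}"
    by (rule finite_subset[OF subset_UNIV]) (simp add: UNIV_agent)
  moreover have "{u, v} \<subseteq> {u. acc u}"
    using assms by auto
  ultimately have "card {u, v} \<le> card {u. acc u}"
    by (rule card_mono)
  then show ?thesis
    using assms(3) unfolding majority_def by simp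
qed

context median_structure
begin

lemma barg_empty_at_median:
  assumes pos: "\<And>u. pos u \<in> V"
    and between: "\<And>u v. u \<noteq> v \<Longrightarrow> w \<in> interval V E (pos u) (pos v)"
  shows "barg V E pos u w = {}"
proof -
  have "pref V E pos u w \<inter> pref V E pos v w = {}" if "v \<noteq> u" for v
    using interval_inter_at_between[OF pos pos between[OF that[symmetric]]]
    unfolding pref_def by blast
  then show ?thesis
    unfolding barg_def by blast
qed

lemma tmr_step_at_median:
  assumes "\<And>u. pos u \<in> V"
    and "\<And>u v. u \<noteq> v \<Longrightarrow> w \<in> interval V E (pos u) (pos v)"
  shows "tmr_step V E pos (w, p) = {Inr w}"
proof -
  have "majority (\<lambda>u. barg V E pos u w = {})"
    using barg_empty_at_median[OF assms] by (intro majority_if_two_accept[of _ X Y]) simp_all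
  then show ?thesis
    unfolding tmr_step_def using barg_empty_at_median[OF assms] by (simp add: Let_def)
qed

lemma median_between_loc:
  assumes "x \<in> V" and "y \<in> V" and "z \<in> V" and "u \<noteq> v"
  shows "median V E x y z \<in> interval V E (loc x y z u) (loc x y z v)"
  using intervals_inter_eq_median[OF assms(1-3)] interval_commute assms
  by (cases u; cases v) (auto simp: loc_def)

lemma barg_start:
  assumes "x \<in> V"
  shows "barg V E (loc x y z) Y x = interval V E y x \<inter> interval V E z x - {x}"
proof -
  have "pref V E (loc x y z) X x = {}"
    unfolding pref_def using interval_self[OF assms] by (simp add: loc_def)
  then show ?thesis
    unfolding barg_def pref_def UNIV_agent by (auto simp: loc_def)
qed

lemma best_barg_start_iff:
  assumes V: "x \<in> V" "y \<in> V" "z \<in> V" and moved: "median V E x y z \<noteq> x"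
  shows "best_barg V E (loc x y z) Y x a \<longleftrightarrow> a = median V E x y z"
proof -
  define m where "m = median V E x y z"
  have m_yx: "m \<in> interval V E y x" and m_zx: "m \<in> interval V E z x"
    using median_between_loc[OF V, of Y X] median_between_loc[OF V, of Z X]
    unfolding m_def by (simp_all add: loc_def)
  have m_barg: "m \<in> barg V E (loc x y z) Y x"
    using barg_start[OF V(1)] m_yx m_zx moved unfolding m_def by simp
  have m_V: "m \<in> V"
    using m_yx unfolding interval_def by simp
  have via_m: "gdist E y b = gdist E y m + gdist E m b \<and> b \<in> V"
    if "b \<in> barg V E (loc x y z) Y x" for b
  proof -
    have "b \<in> interval V E x y \<inter> interval V E x z"
      using that barg_start[OF V(1)] interval_commute V by auto
    then have "b \<in> interval V E m x"
      using interval_inter_subset_interval_median[OF V] interval_commute[OF V(1) m_V]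
      unfolding m_def by auto
    then show ?thesis
      using interval_trans[OF V(2,1) m_yx] unfolding interval_def by auto
  qed
  show ?thesis
  proof
    assume "best_barg V E (loc x y z) Y x a"
    then have "a \<in> barg V E (loc x y z) Y x" and "gdist E y a \<le> gdist E y m"
      using m_barg unfolding best_barg_def by (auto simp: loc_def)
    then have "gdist E m a = 0" and "a \<in> V"
      using via_m by force+
    then have "a = m"
      using gdist_eq_0_iff[OF m_V] by blast
    then show "a = median V E x y z"
      by (simp add: m_def)
  next
    assume "a = median V E x y z"
    moreover have "gdist E y m \<le> gdist E y b" if "b \<in> barg V E (loc x y z) Y x" for b
      using via_m[OF that] by linarith
    ultimately show "best_barg V E (loc x y z) Y x a"
      using m_barg unfolding best_barg_def m_def by (simp add: loc_def)
  qed
qed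

lemma tmr_step_start_moves:
  assumes V: "x \<in> V" "y \<in> V" "z \<in> V" and moved: "median V E x y z \<noteq> x"
  shows "\<exists>q. tmr_step V E (loc x y z) (x, Y) = {Inl (median V E x y z, q)}"
proof -
  define m where "m = median V E x y z"
  define acc where "acc = (\<lambda>u. gdist E (loc x y z u) m < gdist E (loc x y z u) x)"
  have m_V: "m \<in> V"
    using intervals_inter_eq_median[OF V] unfolding m_def interval_def by auto
  have "gdist E m x \<noteq> 0"
    using gdist_eq_0_iff[OF m_V V(1)] moved unfolding m_def by blast
  then have "acc u" if "u \<noteq> X" for u
    using median_between_loc[OF V that] unfolding acc_def m_def interval_def
    by (auto simp: loc_def[of x y z X])
  then have "majority acc"
    by (intro majority_if_two_accept[of _ Y Z]) simp_all
  moreover have "barg V E (loc x y z) Y x \<noteq> {}"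
    using best_barg_start_iff[OF V moved] unfolding best_barg_def by blast
  ultimately have "tmr_step V E (loc x y z) (x, Y) = {Inl (m, next_proposer acc Y)}"
    unfolding tmr_step_def using best_barg_start_iff[OF V moved]
    unfolding acc_def m_def by auto
  then show ?thesis
    unfolding m_def by blast
qed

context
  fixes x y z
  assumes xyz: "x \<in> V" "y \<in> V" "z \<in> V"
begin

lemma tmr_step_median_loc:
  "tmr_step V E (loc x y z) (median V E x y z, p) = {Inr (median V E x y z)}"
proof (rule tmr_step_at_median)
  show "loc x y z u \<in> V" for u
    using xyz unfolding loc_def by (cases u) simp_all
qed (rule median_between_loc[OF xyz])

lemma tmr_step_start_cases:
  "tmr_step V E (loc x y z) (x, Y) = {Inr (median V E x y z)} \<or>
   (\<exists>q. tmr_step V E (loc x y z) (x, Y) = {Inl (median V E x y z, q)})"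
  using tmr_step_median_loc[of Y] tmr_step_start_moves[OF xyz] by (cases "median V E x y z = x") simp_all

lemma reachable_from_start_cases:
  assumes "(tmr_cont V E (loc x y z))\<^sup>*\<^sup>* (x, Y) s"
  shows "s = (x, Y) \<or> fst s = median V E x y z"
  using assms
proof (induction rule: rtranclp_induct)
  case (step s s')
  have "Inl s' \<notin> tmr_step V E (loc x y z) (median V E x y z, snd s)"
    using tmr_step_median_loc by simp
  moreover have "fst s' = median V E x y z" if "Inl s' \<in> tmr_step V E (loc x y z) (x, Y)"
    using tmr_step_start_cases that by (elim disjE exE) auto
  ultimately show ?case
    using step unfolding tmr_cont_def by (cases s) auto
qed simp

lemma tmr_step_reachable_from_start:
  assumes "(tmr_cont V E (loc x y z))\<^sup>*\<^sup>* (x, Y) s"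
  shows "tmr_step V E (loc x y z) s \<noteq> {} \<and>
    (\<forall>w'. Inr w' \<in> tmr_step V E (loc x y z) s \<longrightarrow> w' = median V E x y z)"
proof (cases "s = (x, Y)")
  case True
  then show ?thesis
    using tmr_step_start_cases by (elim disjE exE) auto
next
  case False
  then have "s = (median V E x y z, snd s)"
    using reachable_from_start_cases[OF assms] by (cases s) auto
  then show ?thesis
    using tmr_step_median_loc[of "snd s"] by simp
qed

lemma no_infinite_run_from_start:
  "\<nexists>f. f 0 = (x, Y) \<and> (\<forall>n. tmr_cont V E (loc x y z) (f n) (f (Suc n)))"
proof
  assume "\<exists>f. f 0 = (x, Y) \<and> (\<forall>n. tmr_cont V E (loc x y z) (f n) (f (Suc n)))"
  then obtain f where "f 0 = (x, Y)" and run: "\<And>n. tmr_cont V E (loc x y z) (f n) (f (Suc n))"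
    by blast
  then have "fst (f 1) = median V E x y z"
    using run[of 0] tmr_step_start_cases unfolding tmr_cont_def by (elim disjE exE) auto
  then show False
    using tmr_step_median_loc run[of 1] unfolding tmr_cont_def by (cases "f 1") auto
qed

end

end

theorem lemmaI1:
  fixes V :: "'a set" and E :: "'a \<Rightarrow> 'a \<Rightarrow> bool" and x y z :: 'a
  assumes "median_graph V E" and "x \<in> V" and "y \<in> V" and "z \<in> V"
  defines "pos \<equiv> loc x y z"
  shows "(\<not> (\<exists>f. f 0 = (x, Y) \<and> (\<forall>n. tmr_cont V E pos (f n) (f (Suc n))))) \<and>
         (\<forall>s. (tmr_cont V E pos)\<^sup>*\<^sup>* (x, Y) s \<longrightarrow>
               tmr_step V E pos s \<noteq> {} \<and>
               (\<forall>w'. Inr w' \<in> tmr_step V E pos s \<longrightarrow> w' = median V E x y z))"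
proof -
  interpret median_structure V E
    using assms(1) by (rule median_graph_imp_median_structure)
  show ?thesis
    unfolding pos_def
    using no_infinite_run_from_start[OF assms(2-4)] tmr_step_reachable_from_start[OF assms(2-4)]
    by blast
qed

end
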